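(* The sets $G(z^* )$ and $-G(z^* )=\{-u: u\in G(z^* )\}$ are disjoint, and the following three sets coincide: (i) $G(z^* )\cup(-G(z^* ))$; (ii) the orbit of $z^*$ under $\mathrm{Aut}_{\mathbb Z}(L^* )$; (iii) the orbit of $z^*$ under $\mathrm{AAut}_{\mathbb Z}(L^* )=\mathrm{Isom}_{\mathbb Z}(L^* )$.
   Context: $\mathbb F$ is a field of characteristic zero, $\mathfrak{sl}_2$ the Lie algebra of $2\times2$ trace-zero matrices over $\mathbb F$ with trace form $(u,v)=\mathrm{tr}(uv)$. Let $x^*=\begin{pmatrix}1&-1\\1&-1\end{pmatrix}$, $y^*=\begin{pmatrix}0&0\\1&0\end{pmatrix}$, $z^*=\begin{pmatrix}0&-1\\0&0\end{pmatrix}$, $L^*=\mathbb Zx^*\oplus\mathbb Zy^*\oplus\mathbb Zz^*$. $G$ is the subgroup of $\mathrm{Aut}_{\mathbb F}(\mathfrak{sl}_2)$ generated by $\exp(\mathrm{ad}\,x^* ),\exp(\mathrm{ad}\,y^* ),\exp(\mathrm{ad}\,z^* )$. An antiautomorphism is an $\mathbb F$-linear bijection $\phi$ with $\phi([u,v])=[\phi(v),\phi(u)]$; an isometry is an $\mathbb F$-linear bijection preserving the trace form. $\mathrm{Aut}_{\mathbb Z}(L^* )$, $\mathrm{AAut}_{\mathbb Z}(L^* )$, $\mathrm{Isom}_{\mathbb Z}(L^* )$ are respectively the groups of automorphisms, of automorphisms and antiautomorphisms, and of isometries $\varphi$ of $\mathfrak{sl}_2$ with $\varphi(L^* )=L^*$.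 *)

theory Defs
  imports "HOL-Analysis.Analysis"
begin

type_synonym 'a m2 = "'a^2^2"

definition mk2 :: "'a \<Rightarrow> 'a \<Rightarrow> 'a \<Rightarrow> 'a \<Rightarrow> 'a m2" where
  "mk2 a b c d = (\<chi> i j. if i = 1 then (if j = 1 then a else b) else (if j = 1 then c else d))"

definition mtr :: "'a::semiring_1 m2 \<Rightarrow> 'a" where
  "mtr A = A$1$1 + A$2$2"

definition msmul :: "'a::semiring_1 \<Rightarrow> 'a m2 \<Rightarrow> 'a m2" where
  "msmul c A = (\<chi> i j. c * A$i$j)"

definition sl2 :: "'a::field_char_0 m2 set" where
  "sl2 = {A. mtr A = 0}"

definition lie :: "'a::field_char_0 m2 \<Rightarrow> 'a m2 \<Rightarrow> 'a m2" where
  "lie u v = u ** v - v ** u"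

definition trform :: "'a::field_char_0 m2 \<Rightarrow> 'a m2 \<Rightarrow> 'a" where
  "trform u v = mtr (u ** v)"

definition ad :: "'a::field_char_0 m2 \<Rightarrow> 'a m2 \<Rightarrow> 'a m2" where
  "ad u = lie u"

text \<open>exp of a nilpotent endomorphism of sl_2: ad u is nilpotent with (ad u)^3 = 0
  for each of the nilpotent generators below, so the exponential series is this finite sum.\<close>
definition exp_ad :: "'a::field_char_0 m2 \<Rightarrow> 'a m2 \<Rightarrow> 'a m2" where
  "exp_ad u v = (\<Sum>k<3. msmul (1 / fact k) ((ad u ^^ k) v))"

definition xs :: "'a::field_char_0 m2" where "xs = mk2 1 (-1) 1 (-1)"
definition ys :: "'a::field_char_0 m2" where "ys = mk2 0 0 1 0"
definition zs :: "'a::field_char_0 m2" where "zs = mk2 0 (-1) 0 0"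

definition Lstar :: "'a::field_char_0 m2 set" where
  "Lstar = {msmul (of_int a) xs + msmul (of_int b) ys + msmul (of_int c) zs | a b c. True}"

definition lin_bij :: "('a::field_char_0 m2 \<Rightarrow> 'a m2) \<Rightarrow> bool" where
  "lin_bij f \<longleftrightarrow> bij_betw f sl2 sl2 \<and>
     (\<forall>u\<in>sl2. \<forall>v\<in>sl2. f (u + v) = f u + f v) \<and>
     (\<forall>c. \<forall>u\<in>sl2. f (msmul c u) = msmul c (f u))"

definition is_aut :: "('a::field_char_0 m2 \<Rightarrow> 'a m2) \<Rightarrow> bool" where
  "is_aut f \<longleftrightarrow> lin_bij f \<and> (\<forall>u\<in>sl2. \<forall>v\<in>sl2. f (lie u v) = lie (f u) (f v))"

definition is_antiaut :: "('a::field_char_0 m2 \<Rightarrow> 'a m2) \<Rightarrow> bool" where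
  "is_antiaut f \<longleftrightarrow> lin_bij f \<and> (\<forall>u\<in>sl2. \<forall>v\<in>sl2. f (lie u v) = lie (f v) (f u))"

definition is_isom :: "('a::field_char_0 m2 \<Rightarrow> 'a m2) \<Rightarrow> bool" where
  "is_isom f \<longleftrightarrow> lin_bij f \<and> (\<forall>u\<in>sl2. \<forall>v\<in>sl2. trform (f u) (f v) = trform u v)"

definition AutZ :: "('a::field_char_0 m2 \<Rightarrow> 'a m2) set" where
  "AutZ = {f. is_aut f \<and> f ` Lstar = Lstar}"

definition AAutZ :: "('a::field_char_0 m2 \<Rightarrow> 'a m2) set" where
  "AAutZ = {f. (is_aut f \<or> is_antiaut f) \<and> f ` Lstar = Lstar}"

definition IsomZ :: "('a::field_char_0 m2 \<Rightarrow> 'a m2) set" where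
  "IsomZ = {f. is_isom f \<and> f ` Lstar = Lstar}"

text \<open>The subgroup G of Aut(sl_2) generated by the three exponentials
  (maps are only relevant on sl_2; inverses are taken on sl_2).\<close>
definition gens :: "('a::field_char_0 m2 \<Rightarrow> 'a m2) set" where
  "gens = {exp_ad xs, exp_ad ys, exp_ad zs}"

inductive_set Ggrp :: "('a::field_char_0 m2 \<Rightarrow> 'a m2) set" where
  Gid: "id \<in> Ggrp"
| Gmul: "g \<in> Ggrp \<Longrightarrow> s \<in> gens \<Longrightarrow> s \<circ> g \<in> Ggrp"
| Ginv: "g \<in> Ggrp \<Longrightarrow> s \<in> gens \<Longrightarrow> inv_into sl2 s \<circ> g \<in> Ggrp"

definition orbit :: "('a m2 \<Rightarrow> 'a m2) set \<Rightarrow> 'a m2 \<Rightarrow> 'a m2 set" where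
  "orbit H u = (\<lambda>g. g u) ` H"

end

theory Submission
  imports Defs
begin

(* Proof plan.  Put n(a,c) = [[ac, -a^2], [c^2, -ac]] for integers a, c; these are
   nilpotent elements of Lstar, and zs = n(1,0).

   (1) The G-orbit of zs is N = {n(a,c) | gcd(a,c) = 1}.  Each generator exp(ad x)
       satisfies x^2 = 0, so it equals v + xv - vx - xvx and its inverse on sl_2 is
       exp(ad(-x)); these maps act on n(a,c) by elementary unimodular substitutions
       of (a,c).  Hence N is G-stable, and conversely a Euclidean descent on
       |a| + |c| reaches every coprime pair from (1,0).
   (2) An automorphism, antiautomorphism or isometry f with f(Lstar) = Lstar sends zs to
       a primitive vector of Lstar = {[[p,q],[r,-p]] | p,q,r integers} (f is linear,
       bijective, and Lstar is f-stable) which is isotropic for the trace form.  The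
       primitive integer solutions of p^2 + qr = 0 are exactly +-n(a,c), gcd(a,c) = 1.
   (3) Conversely +-n(a,c) is the image of zs under v |-> det(M) M v M^-1 for an
       integer matrix M with det M = +-1 and first column (a,c); this map is an
       automorphism and an isometry preserving Lstar.
   (4) N and -N are disjoint by the signs of the off-diagonal entries. *)

lemma mk2_nth [simp]:
  "mk2 a b c d $ 1 $ 1 = a" "mk2 a b c d $ 1 $ 2 = b"
  "mk2 a b c d $ 2 $ 1 = c" "mk2 a b c d $ 2 $ 2 = d"
  by (simp_all add: mk2_def)

lemma m2_eq_iff:
  "(A::'a m2) = B \<longleftrightarrow> A$1$1 = B$1$1 \<and> A$1$2 = B$1$2 \<and> A$2$1 = B$2$1 \<and> A$2$2 = B$2$2"
  by (auto simp: vec_eq_iff forall_2)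

lemma m2_exhaust:
  obtains a b c d where "(A::'a m2) = mk2 a b c d"
  using that[of "A$1$1" "A$1$2" "A$2$1" "A$2$2"] by (simp add: m2_eq_iff)

lemma mk2_eq [simp]: "mk2 a b c d = mk2 a' b' c' d' \<longleftrightarrow> a = a' \<and> b = b' \<and> c = c' \<and> d = d'"
  by (simp add: m2_eq_iff)

lemma mk2_mult [simp]:
  "mk2 a b c d ** mk2 e f g h = mk2 (a*e + b*g) (a*f + b*h) (c*e + d*g) (c*f + d*h)"
  by (simp add: m2_eq_iff matrix_matrix_mult_def sum_2)

lemma mk2_add [simp]: "mk2 a b c d + mk2 e f g h = mk2 (a+e) (b+f) (c+g) (d+h)"
  by (simp add: m2_eq_iff)

lemma mk2_diff [simp]: "mk2 a b c d - mk2 e f g h = mk2 (a-e) (b-f) (c-g) (d-h)"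
  by (simp add: m2_eq_iff)

lemma mk2_uminus [simp]: "- mk2 a b c d = mk2 (-a) (-b) (-c) (-d)"
  by (simp add: m2_eq_iff)

lemma zero_mk2: "0 = mk2 0 0 0 0"
  by (simp add: m2_eq_iff)

lemma msmul_mk2 [simp]: "msmul k (mk2 a b c d) = mk2 (k*a) (k*b) (k*c) (k*d)"
  by (simp add: m2_eq_iff msmul_def)

lemma mtr_mk2 [simp]: "mtr (mk2 a b c d) = a + d"
  by (simp add: mtr_def)

lemma sl2_mk2: "(u::'a::field_char_0 m2) \<in> sl2 \<longleftrightarrow> (\<exists>p q r. u = mk2 p q r (-p))"
proof
  assume "u \<in> sl2"
  moreover obtain a b c d where "u = mk2 a b c d" by (rule m2_exhaust)
  ultimately show "\<exists>p q r. u = mk2 p q r (-p)"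
    by (auto simp: sl2_def eq_neg_iff_add_eq_0 add.commute)
qed (auto simp: sl2_def)

lemma zs_sl2: "zs \<in> sl2"
  by (simp add: zs_def sl2_def)

text \<open>For a square-zero matrix x the exponential of ad x is v \<mapsto> (1 + x) v (1 - x),
  so exp(ad(-x)) is its inverse and it preserves sl_2.  All three generators x*, y*, z*
  square to zero.\<close>

lemma exp_ad_eq: "exp_ad u v = v + lie u v + msmul (1/2) (lie u (lie u v))"
proof -
  have "msmul 1 w = w" for w :: "'a m2" by (simp add: msmul_def vec_eq_iff)
  then show ?thesis by (simp add: exp_ad_def eval_nat_numeral lessThan_Suc ad_def)
qed

lemma exp_ad_square_zero:
  assumes "x ** x = 0"
  shows "exp_ad x v = v + x ** v - v ** x - x ** v ** x"
proof -
  obtain a b c d where x: "x = mk2 a b c d" by (rule m2_exhaust)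
  obtain e f g h where v: "v = mk2 e f g h" by (rule m2_exhaust)
  have "a*a + b*c = 0" "a*b + b*d = 0" "c*a + d*c = 0" "c*b + d*d = 0"
    using assms by (simp_all add: x zero_mk2)
  then show ?thesis
    unfolding x v exp_ad_eq lie_def by (simp add: field_simps) algebra
qed

lemma exp_ad_square_zero_inverse:
  assumes sq: "x ** x = 0"
  shows "exp_ad (-x) (exp_ad x v) = v"
proof -
  obtain a b c d where x: "x = mk2 a b c d" by (rule m2_exhaust)
  obtain e f g h where v: "v = mk2 e f g h" by (rule m2_exhaust)
  have sq': "-x ** -x = 0" using sq by (simp add: x)
  have nil: "a*a + b*c = 0" "a*b + b*d = 0" "c*a + d*c = 0" "c*b + d*d = 0"
    using sq by (simp_all add: x zero_mk2)
  let ?w = "v + x ** v - v ** x - x ** v ** x"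
  have "exp_ad (-x) (exp_ad x v) = ?w + (-x) ** ?w - ?w ** (-x) - (-x) ** ?w ** (-x)"
    by (simp only: exp_ad_square_zero[OF sq] exp_ad_square_zero[OF sq'])
  also have "\<dots> = v"
    using nil unfolding x v by simp algebra
  finally show ?thesis .
qed

lemma exp_ad_sl2:
  assumes "v \<in> sl2"
  shows "exp_ad u v \<in> sl2"
proof -
  obtain a b c d where u: "u = mk2 a b c d" by (rule m2_exhaust)
  obtain p q r where v: "v = mk2 p q r (-p)" using assms sl2_mk2 by blast
  show ?thesis unfolding u v by (simp add: sl2_def exp_ad_eq lie_def field_simps)
qed

lemma inv_into_exp_ad:
  assumes "x ** x = 0" "y \<in> sl2"
  shows "inv_into sl2 (exp_ad x) y = exp_ad (-x) y"
proof (rule inv_into_f_eq)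
  have "- x ** - x = 0"
    using assms(1) by (cases x rule: m2_exhaust) (simp add: zero_mk2)
  then show "exp_ad x (exp_ad (-x) y) = y"
    using exp_ad_square_zero_inverse by fastforce
  show "inj_on (exp_ad x) sl2"
    using exp_ad_square_zero_inverse[OF assms(1)] by (metis inj_onI)
qed (use assms(2) exp_ad_sl2 in blast)

lemma generators_square_zero: "x \<in> {xs, ys, zs} \<Longrightarrow> x ** x = 0"
  by (auto simp: xs_def ys_def zs_def zero_mk2)

definition nmat :: "int \<Rightarrow> int \<Rightarrow> 'a::field_char_0 m2" where
  "nmat a c = mk2 (of_int (a*c)) (of_int (-(a^2))) (of_int (c^2)) (of_int (-(a*c)))"

definition Nset :: "'a::field_char_0 m2 set" where
  "Nset = {nmat a c | a c. coprime a c}"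

lemma nmat_sl2: "nmat a c \<in> sl2"
  by (simp add: nmat_def sl2_def)

lemma zs_nmat: "zs = nmat 1 0"
  by (simp add: nmat_def zs_def)

lemma nmat_uminus: "nmat (-a) (-c) = nmat a c"
  by (simp add: nmat_def)

lemma exp_ad_nmat:
  "exp_ad xs (nmat a c) = nmat (2*a - c) a"    "exp_ad (-xs) (nmat a c) = nmat c (2*c - a)"
  "exp_ad ys (nmat a c) = nmat a (a + c)"      "exp_ad (-ys) (nmat a c) = nmat a (c - a)"
  "exp_ad zs (nmat a c) = nmat (a - c) c"      "exp_ad (-zs) (nmat a c) = nmat (a + c) c"
  by (simp_all add: nmat_def xs_def ys_def zs_def exp_ad_eq lie_def algebra_simps power2_eq_square)

text \<open>Unimodular substitutions preserve coprimality: a common divisor of the new pair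
  divides det * a and det * c.\<close>

lemma coprime_unimodular:
  fixes a c p q r t :: int
  assumes "coprime a c" and det: "\<bar>p*t - q*r\<bar> = 1"
    and "a' = p*a + q*c" "c' = r*a + t*c"
  shows "coprime a' c'"
proof (rule coprimeI)
  fix d assume "d dvd a'" "d dvd c'"
  then have "d dvd t*a' - q*c'" "d dvd p*c' - r*a'"
    by simp_all
  then have "d dvd (p*t - q*r) * a" "d dvd (p*t - q*r) * c"
    using assms(3,4) by (simp_all add: algebra_simps)
  moreover have "is_unit (p*t - q*r)" using det by simp
  ultimately have "d dvd a" "d dvd c" by (simp_all add: dvd_mult_unit_iff')
  then show "is_unit d" using coprime_common_divisor[OF \<open>coprime a c\<close>] by blast
qed

lemma coprime_generator_substitutions:
  fixes a c :: int
  assumes "coprime a c"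
  shows "coprime (2*a - c) a" "coprime c (2*c - a)" "coprime a (a + c)" "coprime a (c - a)"
    "coprime (a - c) c" "coprime (a + c) c"
proof -
  show "coprime (2*a - c) a"
    by (rule coprime_unimodular[OF assms, where p=2 and q="-1" and r=1 and t=0]) simp_all
  show "coprime c (2*c - a)"
    by (rule coprime_unimodular[OF assms, where p=0 and q=1 and r="-1" and t=2]) simp_all
  show "coprime a (a + c)"
    by (rule coprime_unimodular[OF assms, where p=1 and q=0 and r=1 and t=1]) simp_all
  show "coprime a (c - a)"
    by (rule coprime_unimodular[OF assms, where p=1 and q=0 and r="-1" and t=1]) simp_all
  show "coprime (a - c) c"
    by (rule coprime_unimodular[OF assms, where p=1 and q="-1" and r=0 and t=1]) simp_all
  show "coprime (a + c) c"
    by (rule coprime_unimodular[OF assms, where p=1 and q=1 and r=0 and t=1]) simp_all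
qed

lemma nmat_in_Nset: "coprime a c \<Longrightarrow> nmat a c \<in> Nset"
  unfolding Nset_def by blast

lemma G_orbit_subset_Nset: "g \<in> Ggrp \<Longrightarrow> g zs \<in> (Nset :: 'a::field_char_0 m2 set)"
proof (induction rule: Ggrp.induct)
  case Gid
  show ?case unfolding zs_nmat by (simp add: nmat_in_Nset)
next
  case (Gmul g s)
  then obtain a c where ac: "g zs = nmat a c" "coprime a c" by (auto simp: Nset_def)
  from \<open>s \<in> gens\<close> consider "s = exp_ad xs" | "s = exp_ad ys" | "s = exp_ad zs"
    by (auto simp: gens_def)
  then show ?case
    using coprime_generator_substitutions[OF ac(2)]
    by cases (simp_all add: ac(1) exp_ad_nmat nmat_in_Nset)
next
  case (Ginv g s)
  then obtain a c where ac: "g zs = nmat a c" "coprime a c" by (auto simp: Nset_def)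
  from \<open>s \<in> gens\<close> obtain x where x: "x \<in> {xs, ys, zs}" "s = exp_ad x"
    by (auto simp: gens_def)
  have "inv_into sl2 s (g zs) = exp_ad (-x) (nmat a c)"
    unfolding ac x(2) using generators_square_zero[OF x(1)] nmat_sl2 by (rule inv_into_exp_ad)
  then show ?case
    using x(1) coprime_generator_substitutions[OF ac(2)]
    by (auto simp: exp_ad_nmat nmat_in_Nset)
qed

lemma G_orbit_exp_ad:
  assumes "u \<in> orbit Ggrp zs" "x \<in> {xs, ys, zs}"
  shows "exp_ad x u \<in> orbit Ggrp zs"
proof -
  obtain g where g: "g \<in> Ggrp" "u = g zs" using assms(1) by (auto simp: orbit_def)
  have "exp_ad x \<circ> g \<in> Ggrp" using g(1) assms(2) by (intro Ggrp.Gmul) (auto simp: gens_def)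
  then show ?thesis using g(2) unfolding orbit_def by (auto intro: rev_image_eqI)
qed

lemma G_orbit_exp_ad_inverse:
  assumes "u \<in> orbit Ggrp zs" "x \<in> {xs, ys, zs}" "u \<in> sl2"
  shows "exp_ad (-x) u \<in> orbit Ggrp zs"
proof -
  obtain g where g: "g \<in> Ggrp" "u = g zs" using assms(1) by (auto simp: orbit_def)
  have "inv_into sl2 (exp_ad x) \<circ> g \<in> Ggrp"
    using g(1) assms(2) by (intro Ggrp.Ginv) (auto simp: gens_def)
  moreover have "inv_into sl2 (exp_ad x) u = exp_ad (-x) u"
    using generators_square_zero[OF assms(2)] assms(3) by (rule inv_into_exp_ad)
  ultimately show ?thesis using g(2) unfolding orbit_def by (auto intro: rev_image_eqI)
qed

lemma G_orbit_shear:
  fixes a c :: int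
  defines "Orb \<equiv> orbit Ggrp zs :: 'a::field_char_0 m2 set"
  shows "nmat (a + c) c \<in> Orb \<longleftrightarrow> nmat a c \<in> Orb"
    and "nmat a (c + a) \<in> Orb \<longleftrightarrow> nmat a c \<in> Orb"
proof -
  have zs: "exp_ad zs (nmat (a + c) c) = (nmat a c :: 'a m2)"
      "exp_ad (-zs) (nmat a c) = (nmat (a + c) c :: 'a m2)"
    and ys: "exp_ad ys (nmat a c) = (nmat a (c + a) :: 'a m2)"
      "exp_ad (-ys) (nmat a (c + a)) = (nmat a c :: 'a m2)"
    by (simp_all add: exp_ad_nmat add.commute)
  show "nmat (a + c) c \<in> Orb \<longleftrightarrow> nmat a c \<in> Orb"
    using G_orbit_exp_ad[of "nmat (a + c) c :: 'a m2" zs]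
      G_orbit_exp_ad_inverse[of "nmat a c :: 'a m2" zs]
    unfolding Orb_def zs by (auto simp: nmat_sl2)
  show "nmat a (c + a) \<in> Orb \<longleftrightarrow> nmat a c \<in> Orb"
    using G_orbit_exp_ad[of "nmat a c :: 'a m2" ys]
      G_orbit_exp_ad_inverse[of "nmat a (c + a) :: 'a m2" ys]
    unfolding Orb_def ys by (auto simp: nmat_sl2)
qed

text \<open>Euclidean descent on |a| + |c|: if a and c are both nonzero, one of a -+ c, c -+ a
  is smaller in absolute value than a resp. c, and a shear leads back to (a,c).\<close>

lemma Nset_subset_G_orbit:
  "coprime a c \<Longrightarrow> (nmat a c :: 'a::field_char_0 m2) \<in> orbit Ggrp zs"
proof (induction "nat (\<bar>a\<bar> + \<bar>c\<bar>)" arbitrary: a c rule: less_induct)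
  case less
  let ?O = "orbit Ggrp zs :: 'a m2 set"
  have IH: "nmat a' c' \<in> ?O" if "\<bar>a'\<bar> + \<bar>c'\<bar> < \<bar>a\<bar> + \<bar>c\<bar>" "coprime a' c'" for a' c'
    using less.hyps that by simp
  note co = coprime_generator_substitutions[OF less.prems]
  note shear = G_orbit_shear[where 'a='a, unfolded]
  have base: "nmat 1 0 \<in> ?O"
    unfolding zs_nmat[symmetric] orbit_def using Ggrp.Gid by (auto intro: rev_image_eqI)
  have "c = 0 \<or> a = 0 \<or> \<bar>a - c\<bar> < \<bar>a\<bar> \<or> \<bar>a + c\<bar> < \<bar>a\<bar>
      \<or> \<bar>c - a\<bar> < \<bar>c\<bar> \<or> \<bar>c + a\<bar> < \<bar>c\<bar>"
    by (auto simp: abs_if)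
  then consider "c = 0" | "a = 0" | "\<bar>a - c\<bar> < \<bar>a\<bar>" | "\<bar>a + c\<bar> < \<bar>a\<bar>"
    | "\<bar>c - a\<bar> < \<bar>c\<bar>" | "\<bar>c + a\<bar> < \<bar>c\<bar>"
    by blast
  then show ?case
  proof cases
    case 1
    then have "a = 1 \<or> a = -1" using less.prems by auto
    then show ?thesis using base 1 by (metis nmat_uminus minus_zero)
  next
    case 2
    have "nmat 1 (-1) \<in> ?O" using base shear(2)[of 1 "-1"] by simp
    then have "nmat 0 (-1) \<in> ?O" using shear(1)[of 1 "-1"] by simp
    moreover have "c = 1 \<or> c = -1" using 2 less.prems by auto
    ultimately show ?thesis using 2 by (metis nmat_uminus minus_zero)
  next
    case 3
    then show ?thesis using IH[of "a - c" c] co shear(1)[of "a - c" c] by simp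
  next
    case 4
    then show ?thesis using IH[of "a + c" c] co shear(1)[of a c] by simp
  next
    case 5
    then show ?thesis using IH[of a "c - a"] co shear(2)[of a "c - a"] by simp
  next
    case 6
    moreover have "coprime a (c + a)" using co by (simp only: add.commute)
    ultimately show ?thesis using IH[of a "c + a"] shear(2)[of a c] by simp
  qed
qed

lemma G_orbit_zs: "orbit Ggrp zs = (Nset :: 'a::field_char_0 m2 set)"
  using G_orbit_subset_Nset Nset_subset_G_orbit unfolding orbit_def Nset_def by blast

definition imat :: "int \<Rightarrow> int \<Rightarrow> int \<Rightarrow> 'a::field_char_0 m2" where
  "imat p q r = mk2 (of_int p) (of_int q) (of_int r) (of_int (-p))"

lemma Lstar_imat: "u \<in> Lstar \<longleftrightarrow> (\<exists>p q r. u = imat p q r)"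
proof
  assume "u \<in> Lstar"
  then obtain a b c where "u = msmul (of_int a) xs + msmul (of_int b) ys + msmul (of_int c) zs"
    unfolding Lstar_def by blast
  then have "u = imat a (-a-c) (a+b)" by (simp add: imat_def xs_def ys_def zs_def)
  then show "\<exists>p q r. u = imat p q r" by blast
next
  assume "\<exists>p q r. u = imat p q r"
  then obtain p q r where "u = imat p q r" by blast
  then have "u = msmul (of_int p) xs + msmul (of_int (r-p)) ys + msmul (of_int (-p-q)) zs"
    by (simp add: imat_def xs_def ys_def zs_def)
  then show "u \<in> Lstar" unfolding Lstar_def by blast
qed

lemma Lstar_integral: "u \<in> Lstar \<longleftrightarrow> u \<in> sl2 \<and> u$1$1 \<in> \<int> \<and> u$1$2 \<in> \<int> \<and> u$2$1 \<in> \<int>"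
proof
  assume "u \<in> Lstar"
  then show "u \<in> sl2 \<and> u$1$1 \<in> \<int> \<and> u$1$2 \<in> \<int> \<and> u$2$1 \<in> \<int>"
    by (auto simp: Lstar_imat imat_def sl2_def)
next
  assume u: "u \<in> sl2 \<and> u$1$1 \<in> \<int> \<and> u$1$2 \<in> \<int> \<and> u$2$1 \<in> \<int>"
  then obtain p q r where "u$1$1 = of_int p" "u$1$2 = of_int q" "u$2$1 = of_int r"
    by (meson Ints_cases)
  moreover obtain p' q' r' where "u = mk2 p' q' r' (-p')" using u sl2_mk2 by blast
  ultimately have "u = imat p q r" by (simp add: imat_def)
  then show "u \<in> Lstar" by (auto simp: Lstar_imat)
qed

lemma Lstar_sl2: "u \<in> Lstar \<Longrightarrow> u \<in> sl2"
  by (simp add: Lstar_integral)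

lemma zs_Lstar: "zs \<in> Lstar"
  unfolding Lstar_imat by (rule exI[of _ 0], rule exI[of _ "-1"], rule exI[of _ 0])
    (simp add: imat_def zs_def)

text \<open>A linear bijection of sl_2 preserving Lstar maps zs to a primitive lattice vector:
  if f zs = d f(w) with w in Lstar, then zs = d w, and the (1,2) entry -1 of zs
  forces d to be a unit.\<close>

lemma image_zs_primitive:
  assumes lb: "lin_bij f" and L: "f ` Lstar = Lstar" and fz: "f zs = imat p q r"
  assumes "d dvd p" "d dvd q" "d dvd r"
  shows "is_unit d"
proof -
  have inj: "inj_on f sl2" using lb unfolding lin_bij_def bij_betw_def by blast
  obtain p' q' r' where pqr: "p = d * p'" "q = d * q'" "r = d * r'"
    using assms(4-6) by (auto elim!: dvdE)
  have "imat p' q' r' \<in> Lstar" using Lstar_imat by blast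
  then obtain w where w: "w \<in> Lstar" "f w = imat p' q' r'" using L by (metis imageE)
  then obtain p'' q'' r'' where w': "w = imat p'' q'' r''" using Lstar_imat by blast
  have wsl: "w \<in> sl2" "msmul (of_int d) w \<in> sl2"
    using w(1) w' by (simp_all add: Lstar_sl2 imat_def sl2_def)
  have "f (msmul (of_int d) w) = msmul (of_int d) (f w)"
    using lb wsl unfolding lin_bij_def by blast
  also have "\<dots> = f zs" using fz pqr w(2) by (simp add: imat_def)
  finally have "msmul (of_int d) w = zs" using inj_onD[OF inj _ wsl(2) zs_sl2] by blast
  then have "of_int (d * q'') = (of_int (-1) :: 'a)" by (simp add: w' imat_def zs_def)
  then have "d * q'' = -1" by (simp only: of_int_eq_iff)
  then show ?thesis by (metis dvd_minus_iff dvd_triv_left)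
qed

text \<open>Automorphisms, antiautomorphisms and isometries all map zs to an isotropic vector:
  for the first two because [h, zs] = 2 zs with h = diag(1,-1), and [w, u] is orthogonal
  to u for the (invariant) trace form.\<close>

lemma trform_lie_self: "trform (lie w u) u = 0" "trform (lie u w) u = 0"
  by (cases u rule: m2_exhaust; cases w rule: m2_exhaust;
      simp add: trform_def lie_def algebra_simps)+

lemma trform_msmul: "trform (msmul k u) v = k * trform u v"
  by (cases u rule: m2_exhaust; cases v rule: m2_exhaust) (simp add: trform_def algebra_simps)

lemma image_zs_isotropic:
  assumes "is_aut f \<or> is_antiaut f \<or> is_isom f"
  shows "trform (f zs) (f zs) = (0::'a::field_char_0)"
proof -
  define h :: "'a m2" where "h = mk2 1 0 0 (-1)"
  have h: "h \<in> sl2" "lie h zs = msmul 2 zs" by (simp_all add: h_def zs_def sl2_def lie_def)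
  have "f (msmul 2 zs) = msmul 2 (f zs)"
    using assms zs_sl2 unfolding is_aut_def is_antiaut_def is_isom_def lin_bij_def by blast
  then have fh: "f (lie h zs) = msmul 2 (f zs)" by (simp add: h)
  from assms consider "is_aut f" | "is_antiaut f" | "is_isom f" by blast
  then show ?thesis
  proof cases
    case 1
    then have "lie (f h) (f zs) = msmul 2 (f zs)"
      using fh h(1) zs_sl2 unfolding is_aut_def by metis
    then show ?thesis using trform_lie_self(1)[of "f h" "f zs"] by (simp add: trform_msmul)
  next
    case 2
    then have "lie (f zs) (f h) = msmul 2 (f zs)"
      using fh h(1) zs_sl2 unfolding is_antiaut_def by metis
    then show ?thesis using trform_lie_self(2)[of "f zs" "f h"] by (simp add: trform_msmul)
  next
    case 3
    then have "trform (f zs) (f zs) = trform zs zs" using zs_sl2 unfolding is_isom_def by blast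
    then show ?thesis by (simp add: zs_def trform_def)
  qed
qed

text \<open>Primitive integer solutions of p^2 + q r = 0: q and r are coprime, so with
  a = gcd p q and c = gcd p r one gets a^2 = |q|, c^2 = |r|, p = +-ac.\<close>

lemma primitive_isotropic_integer:
  fixes p q r :: int
  assumes eq: "p^2 + q*r = 0"
    and prim: "\<And>d. d dvd p \<Longrightarrow> d dvd q \<Longrightarrow> d dvd r \<Longrightarrow> is_unit d"
  obtains a c where "coprime a c"
    "(p = a*c \<and> q = -(a^2) \<and> r = c^2) \<or> (p = -(a*c) \<and> q = a^2 \<and> r = -(c^2))"
proof -
  have qr: "q*r = -(p^2)" using eq by simp
  have co: "coprime q r"
  proof -
    have "(gcd q r)^2 dvd q*r" unfolding power2_eq_square by (rule mult_dvd_mono) auto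
    then have "gcd q r dvd p" unfolding qr by simp
    then show ?thesis using prim[of "gcd q r"] by (auto simp: coprime_iff_gcd_eq_1)
  qed
  define a where "a = gcd p q"
  define c where "c = gcd p r"
  have a2: "a^2 = \<bar>q\<bar>"
  proof -
    have "a^2 = gcd (p^2) (q^2)" by (simp add: a_def)
    also have "\<dots> = gcd (q * (-r)) (q * q)" by (simp add: qr power2_eq_square)
    also have "\<dots> = \<bar>q\<bar>" using co by (simp add: gcd_mult_left coprime_iff_gcd_eq_1 gcd.commute)
    finally show ?thesis .
  qed
  have c2: "c^2 = \<bar>r\<bar>"
  proof -
    have "c^2 = gcd (p^2) (r^2)" by (simp add: c_def)
    also have "\<dots> = gcd (r * (-q)) (r * r)" by (simp add: qr power2_eq_square mult.commute)
    also have "\<dots> = \<bar>r\<bar>" using co by (simp add: gcd_mult_left coprime_iff_gcd_eq_1)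
    finally show ?thesis .
  qed
  have ac: "coprime a c"
    by (rule coprime_divisors[OF _ _ co]) (simp_all add: a_def c_def)
  have sgn: "q \<le> 0 \<and> r \<ge> 0 \<or> q \<ge> 0 \<and> r \<le> 0"
    using qr by (smt (verit) mult_pos_pos mult_neg_neg zero_le_power2)
  have "p^2 = (a*c)^2"
    using qr a2 c2 sgn by (auto simp: power_mult_distrib abs_if)
  then have p: "p = a*c \<or> p = -(a*c)" by (simp add: power2_eq_iff)
  from sgn show ?thesis
  proof (elim disjE conjE)
    assume "q \<le> 0" "r \<ge> 0"
    then have "q = -(a^2)" "r = c^2" using a2 c2 by auto
    then show ?thesis using p that[OF ac] that[of "-a" c] ac by auto
  next
    assume "q \<ge> 0" "r \<le> 0"
    then have "q = a^2" "r = -(c^2)" using a2 c2 by auto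
    then show ?thesis using p that[OF ac] that[of "-a" c] ac by auto
  qed
qed

lemma image_zs_in_pm_Nset:
  assumes lb: "lin_bij f" and L: "f ` Lstar = Lstar" and iso: "trform (f zs) (f zs) = 0"
  shows "f zs \<in> Nset \<union> uminus ` (Nset :: 'a::field_char_0 m2 set)"
proof -
  have "f zs \<in> Lstar" using L zs_Lstar by blast
  then obtain p q r where pqr: "f zs = imat p q r" using Lstar_imat by blast
  have "(of_int (2 * (p^2 + q*r)) :: 'a) = 0"
    using iso unfolding pqr by (simp add: imat_def trform_def algebra_simps power2_eq_square)
  then have "p^2 + q*r = 0" by (simp only: of_int_eq_0_iff) simp
  then obtain a c where ac: "coprime a c"
    "(p = a*c \<and> q = -(a^2) \<and> r = c^2) \<or> (p = -(a*c) \<and> q = a^2 \<and> r = -(c^2))"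
    using primitive_isotropic_integer image_zs_primitive[OF lb L pqr] by metis
  then have "f zs = nmat a c \<or> f zs = - nmat a c"
    using pqr by (auto simp: imat_def nmat_def)
  then show ?thesis using nmat_in_Nset[OF ac(1)] by (metis Un_iff image_eqI)
qed

text \<open>Conjugation by M = [[A,B],[C,D]] twisted by det M: v \<mapsto> det(M) M v adj(M).  For
  det M = +-1 this is det(M) M v M^-1; it is an automorphism and an isometry of sl_2, and
  it preserves Lstar when the entries of M are integers.\<close>

definition signed_conj :: "'a::field_char_0 \<Rightarrow> 'a \<Rightarrow> 'a \<Rightarrow> 'a \<Rightarrow> 'a m2 \<Rightarrow> 'a m2" where
  "signed_conj A B C D v = msmul (A*D - B*C) (mk2 A B C D ** v ** mk2 D (-B) (-C) A)"

lemma signed_conj_inverse: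
  assumes "(A*D - B*C)^2 = 1"
  shows "signed_conj D (-B) (-C) A (signed_conj A B C D v) = v"
proof -
  obtain a b c d where v: "v = mk2 a b c d" by (rule m2_exhaust)
  show ?thesis
    using assms unfolding v signed_conj_def by (simp add: power2_eq_square) (intro conjI; algebra)
qed

lemma signed_conj_sl2:
  assumes "v \<in> sl2"
  shows "signed_conj A B C D v \<in> sl2"
proof -
  obtain p q r where v: "v = mk2 p q r (-p)" using assms sl2_mk2 by blast
  show ?thesis unfolding v sl2_def signed_conj_def by simp algebra
qed

lemma signed_conj_add:
  "signed_conj A B C D (u + v) = signed_conj A B C D u + signed_conj A B C D v"
  by (cases u rule: m2_exhaust; cases v rule: m2_exhaust) (simp add: signed_conj_def algebra_simps)

lemma signed_conj_msmul: "signed_conj A B C D (msmul k u) = msmul k (signed_conj A B C D u)"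
  by (cases u rule: m2_exhaust) (simp add: signed_conj_def algebra_simps)

lemma signed_conj_lie:
  assumes "(A*D - B*C)^2 = 1"
  shows "signed_conj A B C D (lie u v) = lie (signed_conj A B C D u) (signed_conj A B C D v)"
proof -
  obtain a b c d where u: "u = mk2 a b c d" by (rule m2_exhaust)
  obtain e f g h where v: "v = mk2 e f g h" by (rule m2_exhaust)
  show ?thesis
    using assms unfolding u v signed_conj_def lie_def
    by (simp add: power2_eq_square) (intro conjI; algebra)
qed

lemma signed_conj_trform:
  assumes "(A*D - B*C)^2 = 1"
  shows "trform (signed_conj A B C D u) (signed_conj A B C D v) = trform u v"
proof -
  obtain a b c d where u: "u = mk2 a b c d" by (rule m2_exhaust)
  obtain e f g h where v: "v = mk2 e f g h" by (rule m2_exhaust)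
  show ?thesis
    using assms unfolding u v signed_conj_def trform_def
    by (simp add: power2_eq_square) algebra
qed

lemma signed_conj_Lstar:
  assumes "A \<in> \<int>" "B \<in> \<int>" "C \<in> \<int>" "D \<in> \<int>" "u \<in> Lstar"
  shows "signed_conj A B C D u \<in> Lstar"
proof -
  obtain p q r where u: "u = imat p q r" using assms(5) Lstar_imat by blast
  have "signed_conj A B C D u \<in> sl2" using signed_conj_sl2 assms(5) Lstar_sl2 by blast
  moreover have "(signed_conj A B C D u)$1$1 \<in> \<int> \<and> (signed_conj A B C D u)$1$2 \<in> \<int>
      \<and> (signed_conj A B C D u)$2$1 \<in> \<int>"
    using assms(1-4) unfolding u imat_def signed_conj_def by simp
  ultimately show ?thesis using Lstar_integral by blast
qed

lemma signed_conj_in_AutZ_IsomZ: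
  assumes det: "(A*D - B*C)^2 = 1" and int: "A \<in> \<int>" "B \<in> \<int>" "C \<in> \<int>" "D \<in> \<int>"
  shows "signed_conj A B C D \<in> AutZ \<inter> IsomZ"
proof -
  let ?f = "signed_conj A B C D" and ?g = "signed_conj D (-B) (-C) A"
  have det': "(D*A - (-B)*(-C))^2 = 1" using det by (simp add: mult.commute)
  have inv: "?g (?f v) = v" "?f (?g v) = v" for v
    using signed_conj_inverse[OF det] signed_conj_inverse[OF det'] by simp_all
  have "bij_betw ?f sl2 sl2"
    by (rule bij_betwI[where g = ?g]) (auto simp: signed_conj_sl2 inv)
  then have lb: "lin_bij ?f"
    unfolding lin_bij_def by (simp add: signed_conj_add signed_conj_msmul)
  have "?f ` Lstar \<subseteq> Lstar" "?g ` Lstar \<subseteq> Lstar"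
    using signed_conj_Lstar[of A B C D] signed_conj_Lstar[of D "-B" "-C" A] int by auto
  then have "?f ` Lstar = Lstar" using inv by (metis image_subset_iff subsetI subset_antisym imageI)
  with lb signed_conj_lie[OF det] signed_conj_trform[OF det] show ?thesis
    unfolding AutZ_def IsomZ_def is_aut_def is_isom_def by blast
qed

text \<open>Every +-n(a,c) with a, c coprime is realised: complete (a,c) by Bezout to an
  integer matrix of determinant +-1 with first column (a,c).\<close>

lemma signed_conj_zs:
  "signed_conj A B C D zs = msmul (A*D - B*C) (mk2 (A*C) (-(A^2)) (C^2) (-(A*C)))"
  by (simp add: signed_conj_def zs_def power2_eq_square algebra_simps)

lemma pm_Nset_subset_orbits:
  assumes "u \<in> Nset \<union> uminus ` (Nset :: 'a::field_char_0 m2 set)"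
  shows "u \<in> orbit (AutZ \<inter> IsomZ) zs"
proof -
  obtain a c where ac: "coprime a c" and u: "u = nmat a c \<or> u = - nmat a c"
    using assms unfolding Nset_def by blast
  obtain k l where kl: "k * a + l * c = 1"
    using bezout_int[of a c] ac by (auto simp: coprime_iff_gcd_eq_1)
  obtain e :: int where e: "e = 1 \<or> e = -1" and ue: "u = msmul (of_int e) (nmat a c)"
  proof (cases "u = nmat a c")
    case True
    then show ?thesis using that[of 1] by (simp add: nmat_def)
  next
    case False
    then show ?thesis using that[of "-1"] u by (simp add: nmat_def)
  qed
  let ?f = "signed_conj (of_int a) (of_int (-e*l)) (of_int c) (of_int (e*k))
    :: 'a m2 \<Rightarrow> 'a m2"
  have "a * (e*k) - (-e*l) * c = e * (k * a + l * c)" by (simp add: algebra_simps)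
  then have "a * (e*k) - (-e*l) * c = e" using kl by simp
  then have det: "of_int a * of_int (e*k) - of_int (-e*l) * of_int c = (of_int e :: 'a)"
    by (metis of_int_mult of_int_diff)
  have "?f \<in> AutZ \<inter> IsomZ"
    by (rule signed_conj_in_AutZ_IsomZ) (use e det in auto)
  moreover have "?f zs = u" unfolding signed_conj_zs det ue by (simp add: nmat_def)
  ultimately show ?thesis unfolding orbit_def by (metis image_eqI)
qed

text \<open>Every family of maps between AutZ \<inter> IsomZ and AAutZ \<union> IsomZ has orbit N \<union> -N
  through zs; this covers AutZ, AAutZ and IsomZ at once.\<close>

lemma orbit_zs_between:
  assumes "AutZ \<inter> IsomZ \<subseteq> H" "H \<subseteq> AAutZ \<union> IsomZ"
  shows "orbit H zs = Nset \<union> uminus ` (Nset :: 'a::field_char_0 m2 set)"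
proof
  show "orbit H zs \<subseteq> Nset \<union> uminus ` Nset"
  proof
    fix u assume "u \<in> orbit H zs"
    then obtain f where "f \<in> H" and u: "u = f zs" by (auto simp: orbit_def)
    then have f: "(is_aut f \<or> is_antiaut f \<or> is_isom f) \<and> f ` Lstar = Lstar"
      using assms(2) unfolding AAutZ_def IsomZ_def by blast
    then have "lin_bij f" unfolding is_aut_def is_antiaut_def is_isom_def by blast
    then show "u \<in> Nset \<union> uminus ` Nset"
      unfolding u using f image_zs_isotropic image_zs_in_pm_Nset by blast
  qed
  show "Nset \<union> uminus ` Nset \<subseteq> orbit H zs"
    using pm_Nset_subset_orbits assms(1) unfolding orbit_def by blast
qed

text \<open>N and -N are disjoint: the (1,2) entries are -a^2 \<le> 0 and a'^2 \<ge> 0, the (2,1) entries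
  c^2 \<ge> 0 and -c'^2 \<le> 0, which forces a = c = 0, impossible for coprime a, c.\<close>

lemma Nset_disjoint: "(Nset :: 'a::field_char_0 m2 set) \<inter> uminus ` Nset = {}"
proof (rule ccontr)
  assume "Nset \<inter> uminus ` Nset \<noteq> ({} :: 'a m2 set)"
  then obtain a c a' c' where ac: "coprime a c" and "(nmat a c :: 'a m2) = - nmat a' c'"
    unfolding Nset_def by blast
  then have "(of_int (-(a^2)) :: 'a) = of_int (a'^2)" "(of_int (c^2) :: 'a) = of_int (-(c'^2))"
    by (simp_all add: nmat_def)
  then have "-(a^2) = a'^2" "c^2 = -(c'^2)" by (simp_all only: of_int_eq_iff)
  then have "a = 0" "c = 0"
    by (smt (verit) zero_le_power2 power2_less_eq_zero_iff)+
  then show False using ac by simp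
qed

theorem theorem6p10:
  shows "orbit (Ggrp :: ('a::field_char_0 m2 \<Rightarrow> 'a m2) set) zs \<inter> uminus ` orbit Ggrp zs = {}
    \<and> orbit Ggrp zs \<union> uminus ` orbit Ggrp zs = orbit AutZ (zs :: 'a m2)
    \<and> orbit AutZ (zs :: 'a m2) = orbit AAutZ zs
    \<and> orbit AAutZ (zs :: 'a m2) = orbit IsomZ zs"
proof -
  have "orbit AutZ zs = Nset \<union> uminus ` (Nset :: 'a m2 set)"
    by (rule orbit_zs_between) (auto simp: AutZ_def AAutZ_def)
  moreover have "orbit AAutZ zs = Nset \<union> uminus ` (Nset :: 'a m2 set)"
    by (rule orbit_zs_between) (auto simp: AutZ_def AAutZ_def)
  moreover have "orbit IsomZ zs = Nset \<union> uminus ` (Nset :: 'a m2 set)"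
    by (rule orbit_zs_between) auto
  ultimately show ?thesis
    unfolding G_orbit_zs using Nset_disjoint by simp
qed

end
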